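(* The linear map $\mathrm{STSym}^*\to\mathrm{NCQSym}$ defined by $F_u^*\mapsto Q_{\mathbf w(u)^{-1}}$ is an injective morphism of Hopf algebras.
   Context: A packed word is a word $w=w_1\cdots w_n$ of positive integers whose set of letters is $\{1,\dots,m\}$ for some $m$. For a word $a$ of positive integers, $\mathrm{pack}(a)$ is the unique packed word $b$ of the same length with $b_i<b_j\iff a_i<a_j$. A generalized Stirling permutation (GSP) of degree $n$ is a planar tree (children of each node linearly ordered, each node a leaf or with $\ge2$ children) with $n+1$ leaves, together with a bijection $\kappa$ from its internal nodes to $\{1,\dots,N\}$ ($N$ = number of internal nodes) increasing from each internal node to its internal children. Its word $\mathbf w(u)$: a leaf has empty word; a node $x$ with children $c_1,\dots,c_k$ has word $\mathbf w(c_1)\kappa(x)\mathbf w(c_2)\cdots\kappa(x)\mathbf w(c_k)$. The map $u\mapsto\mathbf w(u)$ is a bijection from GSPs of degree $n$ to the $212$-avoiding packed words of length $n$ (words with no $i<j<k$, $w_i=w_k>w_j$); we identify $u$ with $\mathbf w(u)=u_1\cdots u_n$. $\mathrm{STSym}$ is the Hopf algebra with basis $\{F_u\}$ over GSPs, with product $F_u\cdot F_v=\sum F_w$ over all words $w$ that are shuffles of $u$ and of $v$ with every letter increased by $\max u$, and that are $212$-avoiding; and coproduct $\Delta(F_w)=\sum F_{\mathrm{pack}(w_1\cdots w_i)}\otimes F_{\mathrm{pack}(w_{i+1}\cdots w_n)}$ over $0\le i\le n$ with $\{w_1,\dots,w_i\}\cap\{w_{i+1},\dots,w_n\}=\emptyset$.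 $\mathrm{STSym}^*$ is its graded dual with dual basis $\{F_u^*\}$. $\mathrm{NCQSym}$ is the Hopf algebra with basis $\{Q_{w^{-1}}\}$ indexed by packed words $w$ (here $w^{-1}$ denotes the set composition $(w^{-1}(1),\dots,w^{-1}(m))$, $w^{-1}(a)=\{p:w_p=a\}$), with product $Q_{u^{-1}}Q_{v^{-1}}=\sum Q_{w^{-1}}$ over packed words $w=w_1\cdots w_{n+m}$ ($n=|u|,m=|v|$) with $\mathrm{pack}(w_1\cdots w_n)=u$, $\mathrm{pack}(w_{n+1}\cdots w_{n+m})=v$ and $\{w_1,\dots,w_n\}\cap\{w_{n+1},\dots,w_{n+m}\}=\emptyset$; and coproduct $\Delta(Q_{w^{-1}})=\sum_{i=0}^{\max w}Q_{\mathrm{pack}(w|_{\le i})^{-1}}\otimes Q_{\mathrm{pack}(w|_{>i})^{-1}}$, where $w|_{\le i}$ (resp. $w|_{>i}$) is the subword of $w$ formed by the letters $\le i$ (resp. $>i$). *)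

theory Defs
  imports Main
begin

text \<open>Words of positive integers are lists of naturals; positions are 0-based.\<close>

definition packed :: "nat list \<Rightarrow> bool" where
  "packed w \<longleftrightarrow> (\<exists>m. set w = {1..m})"

definition maxw :: "nat list \<Rightarrow> nat" where
  "maxw w = Max (insert 0 (set w))"

text \<open>pack a: the unique packed word b of the same length with b_i < b_j iff a_i < a_j;
  explicitly, the letter a_i is replaced by its rank among the distinct letters of a.\<close>
definition pack :: "nat list \<Rightarrow> nat list" where
  "pack a = map (\<lambda>x. card {y \<in> set a. y \<le> x}) a"

definition avoids212 :: "nat list \<Rightarrow> bool" where
  "avoids212 w \<longleftrightarrow> \<not> (\<exists>i j k. i < j \<and> j < k \<and> k < length w \<and> w ! i = w ! k \<and> w ! j < w ! i)"

text \<open>GSPs are identified (via the bijection u \<mapsto> w(u)) with 212-avoiding packed words.\<close>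
definition GSP :: "nat list set" where
  "GSP = {w. packed w \<and> avoids212 w}"

text \<open>The word w(u) of a GSP u; under the identification it is u itself.\<close>
definition gsp_word :: "nat list \<Rightarrow> nat list" where
  "gsp_word u = u"

text \<open>STSym: coefficient of F_w in F_u \<cdot> F_v.\<close>
definition st_prod_coeff :: "nat list \<Rightarrow> nat list \<Rightarrow> nat list \<Rightarrow> nat" where
  "st_prod_coeff u v w =
     (if w \<in> shuffles u (map (\<lambda>x. x + maxw u) v) \<and> avoids212 w then 1 else 0)"

text \<open>STSym: coefficient of F_u \<otimes> F_v in \<Delta>(F_w).\<close>
definition st_coprod_coeff :: "nat list \<Rightarrow> nat list \<Rightarrow> nat list \<Rightarrow> nat" where
  "st_coprod_coeff w u v =
     card {i. i \<le> length w \<and> set (take i w) \<inter> set (drop i w) = {}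
              \<and> pack (take i w) = u \<and> pack (drop i w) = v}"

text \<open>NCQSym (basis Q_{w^{-1}} indexed by the packed word w): coefficient of Q_{w^{-1}}
  in Q_{u^{-1}} Q_{v^{-1}}.\<close>
definition nc_prod_coeff :: "nat list \<Rightarrow> nat list \<Rightarrow> nat list \<Rightarrow> nat" where
  "nc_prod_coeff u v w =
     (if packed w \<and> length w = length u + length v
         \<and> pack (take (length u) w) = u \<and> pack (drop (length u) w) = v
         \<and> set (take (length u) w) \<inter> set (drop (length u) w) = {} then 1 else 0)"

text \<open>NCQSym: coefficient of Q_{u^{-1}} \<otimes> Q_{v^{-1}} in \<Delta>(Q_{w^{-1}}).\<close>
definition nc_coprod_coeff :: "nat list \<Rightarrow> nat list \<Rightarrow> nat list \<Rightarrow> nat" where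
  "nc_coprod_coeff w u v =
     card {i. i \<le> maxw w \<and> pack (filter (\<lambda>x. x \<le> i) w) = u
              \<and> pack (filter (\<lambda>x. i < x) w) = v}"

text \<open>An element of a space with basis indexed by words is its coefficient function
  (finitely supported); tensors have coefficient functions on pairs of words.\<close>

definition supp :: "('a \<Rightarrow> 'k::zero) \<Rightarrow> 'a set" where
  "supp f = {x. f x \<noteq> 0}"

definition space :: "'a set \<Rightarrow> ('a \<Rightarrow> 'k::zero) set" where
  "space B = {f. finite (supp f) \<and> supp f \<subseteq> B}"

definition delta :: "'a \<Rightarrow> 'a \<Rightarrow> 'k::{zero,one}" where
  "delta a x = (if x = a then 1 else 0)"

definition mult_sc :: "('a \<Rightarrow> 'a \<Rightarrow> 'a \<Rightarrow> nat) \<Rightarrow> ('a \<Rightarrow> 'k::comm_ring_1) \<Rightarrow> ('a \<Rightarrow> 'k) \<Rightarrow> 'a \<Rightarrow> 'k" where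
  "mult_sc c f g w = (\<Sum>u\<in>supp f. \<Sum>v\<in>supp g. f u * g v * of_nat (c u v w))"

definition comult_sc :: "('a \<Rightarrow> 'a \<Rightarrow> 'a \<Rightarrow> nat) \<Rightarrow> ('a \<Rightarrow> 'k::comm_ring_1) \<Rightarrow> 'a \<times> 'a \<Rightarrow> 'k" where
  "comult_sc d f = (\<lambda>(u, v). \<Sum>w\<in>supp f. f w * of_nat (d w u v))"

definition counit_sc :: "('a \<Rightarrow> 'k::comm_ring_1) \<Rightarrow> ('a \<Rightarrow> 'k) \<Rightarrow> 'k" where
  "counit_sc e f = (\<Sum>w\<in>supp f. f w * e w)"

definition linmap :: "('a \<Rightarrow> 'b) \<Rightarrow> ('a \<Rightarrow> 'k::comm_ring_1) \<Rightarrow> 'b \<Rightarrow> 'k" where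
  "linmap \<sigma> f = (\<lambda>y. \<Sum>x\<in>supp f. if \<sigma> x = y then f x else 0)"

text \<open>In the dual basis F_u^*, the product is the transpose of the coproduct of STSym,
  the coproduct is the transpose of the product of STSym, the unit is F_{[]}^*
  (transpose of the counit \<epsilon>(F_w) = [w = []]) and the counit is the transpose of the
  unit F_{[]} of STSym.\<close>

definition STdual_space :: "(nat list \<Rightarrow> 'k::comm_ring_1) set" where
  "STdual_space = space GSP"

definition STdual_mult :: "(nat list \<Rightarrow> 'k::comm_ring_1) \<Rightarrow> (nat list \<Rightarrow> 'k) \<Rightarrow> nat list \<Rightarrow> 'k" where
  "STdual_mult = mult_sc (\<lambda>u v w. if u \<in> GSP \<and> v \<in> GSP \<and> w \<in> GSP then st_coprod_coeff w u v else 0)"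

definition STdual_comult :: "(nat list \<Rightarrow> 'k::comm_ring_1) \<Rightarrow> nat list \<times> nat list \<Rightarrow> 'k" where
  "STdual_comult = comult_sc (\<lambda>w u v. if u \<in> GSP \<and> v \<in> GSP \<and> w \<in> GSP then st_prod_coeff u v w else 0)"

definition STdual_unit :: "nat list \<Rightarrow> 'k::comm_ring_1" where
  "STdual_unit = delta []"

definition STdual_counit :: "(nat list \<Rightarrow> 'k::comm_ring_1) \<Rightarrow> 'k" where
  "STdual_counit = counit_sc (delta [])"

definition NCQ_space :: "(nat list \<Rightarrow> 'k::comm_ring_1) set" where
  "NCQ_space = space {w. packed w}"

definition NCQ_mult :: "(nat list \<Rightarrow> 'k::comm_ring_1) \<Rightarrow> (nat list \<Rightarrow> 'k) \<Rightarrow> nat list \<Rightarrow> 'k" where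
  "NCQ_mult = mult_sc (\<lambda>u v w. if packed u \<and> packed v \<and> packed w then nc_prod_coeff u v w else 0)"

definition NCQ_comult :: "(nat list \<Rightarrow> 'k::comm_ring_1) \<Rightarrow> nat list \<times> nat list \<Rightarrow> 'k" where
  "NCQ_comult = comult_sc (\<lambda>w u v. if packed u \<and> packed v \<and> packed w then nc_coprod_coeff w u v else 0)"

definition NCQ_unit :: "nat list \<Rightarrow> 'k::comm_ring_1" where
  "NCQ_unit = delta []"

definition NCQ_counit :: "(nat list \<Rightarrow> 'k::comm_ring_1) \<Rightarrow> 'k" where
  "NCQ_counit = counit_sc (delta [])"

text \<open>The map F_u^* \<mapsto> Q_{w(u)^{-1}}, and its tensor square.\<close>
definition Phi :: "(nat list \<Rightarrow> 'k::comm_ring_1) \<Rightarrow> nat list \<Rightarrow> 'k" where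
  "Phi = linmap gsp_word"

definition Phi2 :: "(nat list \<times> nat list \<Rightarrow> 'k::comm_ring_1) \<Rightarrow> nat list \<times> nat list \<Rightarrow> 'k" where
  "Phi2 = linmap (map_prod gsp_word gsp_word)"

end

theory Submission
  imports Defs "HOL-Library.Sublist"
begin

text \<open>Since GSPs are identified with their words, \<open>Phi\<close> is the identity on finitely supported
  functions, so injectivity is free and everything reduces to comparing structure constants.
  A word avoids 212 iff it has no subsequence \<open>[a, b, a]\<close> with \<open>b < a\<close>; this property passes to
  subsequences, is invariant under packing, and survives concatenation of words with disjoint
  alphabets, since the two outer letters of a 212 pattern are equal and so cannot straddle the cut.
  Products: the deconcatenation coefficient of \<open>STSym\<close> and the product coefficient of \<open>NCQSym\<close>
  are both 1 exactly when the cut of \<open>w\<close> after \<open>length u\<close> letters separates the alphabets and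
  packs to \<open>u\<close> and \<open>v\<close>; such a \<open>w\<close> avoids 212 whenever \<open>u\<close> and \<open>v\<close> do.
  Coproducts: for a packed word \<open>w\<close> the only admissible threshold is \<open>i = max u\<close>, and it works
  iff \<open>w\<close> is a shuffle of \<open>u\<close> and of \<open>v\<close> shifted by \<open>max u\<close>; the two factors, being
  subsequences of \<open>w\<close> up to a shift, avoid 212 when \<open>w\<close> does.\<close>

section \<open>212-avoidance as pattern avoidance\<close>

lemma subseq_nth_Cons_drop:
  assumes "i < k" "k \<le> length w" "subseq xs (drop k w)"
  shows "subseq (w ! i # xs) (drop i w)"
proof -
  have "drop (Suc i) w = take (k - Suc i) (drop (Suc i) w) @ drop k w"
    using assms(1) by (metis append_take_drop_id drop_drop Suc_leI le_add_diff_inverse2)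
  then have "subseq xs (drop (Suc i) w)" using assms(3) by (metis subseq_drop_many)
  then show ?thesis using assms(1,2) by (metis Cons_nth_drop_Suc order_less_le_trans subseq_Cons2)
qed

lemma subseq_nth_three:
  assumes "i < j" "j < k" "k < length w"
  shows "subseq [w ! i, w ! j, w ! k] w"
proof -
  have "subseq [w ! k] (drop k w)" using assms(3) by (rule subseq_nth_Cons_drop) simp_all
  then have "subseq [w ! j, w ! k] (drop j w)" using assms by (intro subseq_nth_Cons_drop) simp_all
  then have "subseq [w ! i, w ! j, w ! k] (drop i w)" using assms by (intro subseq_nth_Cons_drop) simp_all
  then show ?thesis by (metis drop_0 subseq_drop_many append_take_drop_id)
qed

lemma subseq_three_iff:
  "subseq [a, b, c] w \<longleftrightarrow> (\<exists>p q r s. w = p @ a # q @ b # r @ c # s)"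
proof
  assume "subseq [a, b, c] w"
  then show "\<exists>p q r s. w = p @ a # q @ b # r @ c # s"
    by (fastforce dest!: list_emb_ConsD)
qed (auto intro!: subseq_drop_many)

lemma avoids212_iff_subseq: "avoids212 w \<longleftrightarrow> \<not> (\<exists>a b. b < a \<and> subseq [a, b, a] w)"
proof
  assume "avoids212 w"
  show "\<not> (\<exists>a b. b < a \<and> subseq [a, b, a] w)"
  proof
    assume "\<exists>a b. b < a \<and> subseq [a, b, a] w"
    then obtain a b p q r s where "b < a" and w: "w = p @ a # q @ b # r @ a # s"
      unfolding subseq_three_iff by blast
    define j where "j = length p + Suc (length q)"
    define k where "k = j + Suc (length r)"
    have "length p < j \<and> j < k \<and> k < length w \<and> w ! length p = w ! k \<and> w ! j < w ! length p"
      using \<open>b < a\<close> unfolding w j_def k_def by (simp add: nth_append)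
    with \<open>avoids212 w\<close> show False unfolding avoids212_def by blast
  qed
next
  assume "\<not> (\<exists>a b. b < a \<and> subseq [a, b, a] w)"
  then show "avoids212 w"
    unfolding avoids212_def by (metis subseq_nth_three)
qed

lemma avoids212_subseq: "subseq x w \<Longrightarrow> avoids212 w \<Longrightarrow> avoids212 x"
  unfolding avoids212_iff_subseq using subseq_order.order_trans by blast

lemma avoids212_map_iff:
  assumes "strict_mono_on (set x) g"
  shows "avoids212 (map g x) \<longleftrightarrow> avoids212 x"
proof -
  have "g (x ! i) = g (x ! k) \<longleftrightarrow> x ! i = x ! k" "g (x ! j) < g (x ! i) \<longleftrightarrow> x ! j < x ! i"
    if "i < length x" "j < length x" "k < length x" for i j k
    using that strict_mono_on_eq[OF assms] strict_mono_on_less[OF assms] by simp_all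
  then show ?thesis unfolding avoids212_def by (auto 0 4)
qed

lemma avoids212_append:
  assumes "set x \<inter> set y = {}" "avoids212 x" "avoids212 y"
  shows "avoids212 (x @ y)"
  unfolding avoids212_iff_subseq
proof (intro notI, elim exE conjE)
  fix a b assume "b < a" "subseq [a, b, a] (x @ y)"
  then obtain l1 l2 where l: "[a, b, a] = l1 @ l2" "subseq l1 x" "subseq l2 y"
    by (auto elim: subseq_appendE)
  show False
  proof (cases "l1 = [] \<or> l2 = []")
    case True
    then show False using l \<open>b < a\<close> assms(2,3) unfolding avoids212_iff_subseq by auto
  next
    case False
    then have "hd l1 = a" "last l2 = a"
      using arg_cong[OF l(1), of hd] arg_cong[OF l(1), of last] by auto
    then have "a \<in> set l1" "a \<in> set l2" using False hd_in_set[of l1] last_in_set[of l2] by auto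
    then show False using l(2,3) assms(1) by (auto dest: list_emb_set)
  qed
qed

lemma strict_mono_on_rank: "strict_mono_on (set x) (\<lambda>y. card {z \<in> set x. z \<le> (y::nat)})"
proof (rule strict_mono_onI)
  fix a b assume "a \<in> set x" "b \<in> set x" "a < b"
  then have "b \<in> {z \<in> set x. z \<le> b} - {z \<in> set x. z \<le> a}" by simp
  then show "card {z \<in> set x. z \<le> a} < card {z \<in> set x. z \<le> b}"
    using \<open>a < b\<close> by (intro psubset_card_mono) (simp, fastforce)
qed

lemma avoids212_pack_iff: "avoids212 (pack x) \<longleftrightarrow> avoids212 x"
  unfolding pack_def by (rule avoids212_map_iff[OF strict_mono_on_rank])

section \<open>Packed words\<close>

lemma length_pack [simp]: "length (pack x) = length x"
  by (simp add: pack_def)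

lemma maxw_eq: "set w = {1..m} \<Longrightarrow> maxw w = m"
proof -
  assume "set w = {1..m}"
  then have "insert 0 (set w) = {0..m}" by auto
  moreover have "Max {0..m} = m" by (rule Max_eqI) simp_all
  ultimately show ?thesis unfolding maxw_def by simp
qed

lemma maxw_mono: "set u \<subseteq> set w \<Longrightarrow> maxw u \<le> maxw w"
  unfolding maxw_def by (intro Max_mono) auto

lemma set_packed: "packed w \<Longrightarrow> set w = {1..maxw w}"
  unfolding packed_def using maxw_eq by blast

lemma pack_shift:
  assumes "set x = {Suc k..m}"
  shows "pack x = map (\<lambda>y. y - k) x"
  unfolding pack_def
proof (rule map_cong[OF refl])
  fix y assume "y \<in> set x"
  then have "{z \<in> set x. z \<le> y} = {Suc k..y}" using assms by auto
  then show "card {z \<in> set x. z \<le> y} = y - k" by simp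
qed

lemma pack_packed: "packed x \<Longrightarrow> pack x = x"
  using pack_shift[of x 0 "maxw x"] set_packed[of x] by simp

lemma finite_packed_length_le: "finite {w. packed w \<and> length w \<le> n}"
proof (rule finite_subset)
  have "maxw w \<le> length w" if "packed w" for w
    using card_length[of w] set_packed[OF that] by simp
  then show "{w. packed w \<and> length w \<le> n} \<subseteq> {w. set w \<subseteq> {0..n} \<and> length w \<le> n}"
    using set_packed by fastforce
qed (simp add: finite_lists_length_le)

lemma shuffles_threshold_iff:
  fixes k :: "'a::linorder"
  assumes "\<forall>x\<in>set xs. x \<le> k" "\<forall>y\<in>set ys. k < y"
  shows "w \<in> shuffles xs ys \<longleftrightarrow> filter (\<lambda>x. x \<le> k) w = xs \<and> filter (\<lambda>x. k < x) w = ys"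
proof
  assume w: "w \<in> shuffles xs ys"
  have disj: "set xs \<inter> set ys = {}" using assms by fastforce
  have "filter (\<lambda>x. x \<le> k) w = filter (\<lambda>x. x \<in> set xs) w"
    "filter (\<lambda>x. k < x) w = filter (\<lambda>x. x \<notin> set xs) w"
    using assms set_shuffles[OF w] by (auto intro!: filter_cong dest: leD)
  then show "filter (\<lambda>x. x \<le> k) w = xs \<and> filter (\<lambda>x. k < x) w = ys"
    using filter_shuffles_disjoint1[OF disj w] by simp
next
  assume "filter (\<lambda>x. x \<le> k) w = xs \<and> filter (\<lambda>x. k < x) w = ys"
  then show "w \<in> shuffles xs ys"
    using partition_in_shuffles[of w "\<lambda>x. x \<le> k"] by (simp add: not_le)
qed

lemma avoids212_shuffles_disjoint:
  assumes "w \<in> shuffles xs ys" "set xs \<inter> set ys = {}" "avoids212 w"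
  shows "avoids212 xs" "avoids212 ys"
  using avoids212_subseq[OF subseq_filter_left assms(3)] filter_shuffles_disjoint1[OF assms(2,1)]
  by metis+

section \<open>Structure constants\<close>

lemma st_coprod_coeff_eq_nc_prod_coeff:
  assumes "packed w"
  shows "st_coprod_coeff w u v = nc_prod_coeff u v w"
proof -
  define C where "C \<longleftrightarrow> length w = length u + length v
    \<and> pack (take (length u) w) = u \<and> pack (drop (length u) w) = v
    \<and> set (take (length u) w) \<inter> set (drop (length u) w) = {}"
  have "i \<le> length w \<and> set (take i w) \<inter> set (drop i w) = {}
          \<and> pack (take i w) = u \<and> pack (drop i w) = v \<longleftrightarrow> i = length u \<and> C" for i
  proof
    assume h: "i \<le> length w \<and> set (take i w) \<inter> set (drop i w) = {}
          \<and> pack (take i w) = u \<and> pack (drop i w) = v"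
    then have "length u = i" "length v = length w - i"
      using length_pack[of "take i w"] length_pack[of "drop i w"] by auto
    then show "i = length u \<and> C" using h unfolding C_def by auto
  qed (auto simp: C_def)
  then have "{i. i \<le> length w \<and> set (take i w) \<inter> set (drop i w) = {}
          \<and> pack (take i w) = u \<and> pack (drop i w) = v} = (if C then {length u} else {})"
    by auto
  then show ?thesis
    using assms unfolding st_coprod_coeff_def nc_prod_coeff_def C_def by simp
qed

lemma nc_prod_coeff_avoids212:
  assumes "nc_prod_coeff u v w \<noteq> 0" "avoids212 u" "avoids212 v"
  shows "avoids212 w"
proof -
  let ?x = "take (length u) w" and ?y = "drop (length u) w"
  have "pack ?x = u" "pack ?y = v" "set ?x \<inter> set ?y = {}"
    using assms(1) unfolding nc_prod_coeff_def by (auto split: if_splits)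
  then have "avoids212 (?x @ ?y)"
    using assms(2,3) avoids212_pack_iff[of ?x] avoids212_pack_iff[of ?y]
    by (intro avoids212_append) auto
  then show ?thesis by simp
qed

lemma pack_filter_threshold_iff:
  assumes "packed w" "packed u" "packed v"
  shows "i \<le> maxw w \<and> pack (filter (\<lambda>x. x \<le> i) w) = u \<and> pack (filter (\<lambda>x. i < x) w) = v
    \<longleftrightarrow> i = maxw u \<and> w \<in> shuffles u (map (\<lambda>x. x + maxw u) v)"
proof
  assume h: "i \<le> maxw w \<and> pack (filter (\<lambda>x. x \<le> i) w) = u \<and> pack (filter (\<lambda>x. i < x) w) = v"
  have low: "set (filter (\<lambda>x. x \<le> i) w) = {Suc 0..i}"
    and high: "set (filter (\<lambda>x. i < x) w) = {Suc i..maxw w}"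
    using h set_packed[OF assms(1)] by auto
  have u: "u = filter (\<lambda>x. x \<le> i) w"
    using h pack_shift[OF low] by simp
  have "v = map (\<lambda>y. y - i) (filter (\<lambda>x. i < x) w)"
    using h pack_shift[OF high] by simp
  then have "map (\<lambda>x. x + i) v = filter (\<lambda>x. i < x) w"
    by (auto intro!: map_idI)
  moreover have "maxw u = i" using u low maxw_eq by simp
  ultimately show "i = maxw u \<and> w \<in> shuffles u (map (\<lambda>x. x + maxw u) v)"
    using u by (subst shuffles_threshold_iff) auto
next
  assume h: "i = maxw u \<and> w \<in> shuffles u (map (\<lambda>x. x + maxw u) v)"
  have high: "set (map (\<lambda>x. x + i) v) = {Suc i..maxw v + i}"
    using set_packed[OF assms(3)] by (auto simp: image_iff intro!: bexI[where x = "_ - i"])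
  have "filter (\<lambda>x. x \<le> i) w = u" "filter (\<lambda>x. i < x) w = map (\<lambda>x. x + i) v"
    using h set_packed[OF assms(2)] high
    by (subst (asm) shuffles_threshold_iff[where k = i]; force)+
  moreover have "i \<le> maxw w"
    using h set_shuffles maxw_mono by (metis Un_upper1)
  ultimately show "i \<le> maxw w \<and> pack (filter (\<lambda>x. x \<le> i) w) = u \<and> pack (filter (\<lambda>x. i < x) w) = v"
    using pack_packed[OF assms(2)] pack_shift[OF high] by (simp add: comp_def)
qed

lemma nc_coprod_coeff_eq_shuffles:
  assumes "packed w" "packed u" "packed v"
  shows "nc_coprod_coeff w u v = (if w \<in> shuffles u (map (\<lambda>x. x + maxw u) v) then 1 else 0)"
  unfolding nc_coprod_coeff_def pack_filter_threshold_iff[OF assms] by simp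

section \<open>Finitely supported coefficient functions\<close>

lemma finite_supp_delta: "finite (supp (delta a))"
  by (rule finite_subset[of _ "{a}"]) (auto simp: supp_def delta_def)

lemma linmap_id: "finite (supp f) \<Longrightarrow> linmap id f = f"
  unfolding linmap_def by (auto simp: supp_def)

lemma Phi_eq_self: "finite (supp f) \<Longrightarrow> Phi f = f"
  unfolding Phi_def gsp_word_def id_def[symmetric] by (rule linmap_id)

lemma Phi2_eq_self: "finite (supp f) \<Longrightarrow> Phi2 f = f"
  unfolding Phi2_def gsp_word_def id_def[symmetric] map_prod.id by (rule linmap_id)

lemma mult_sc_cong:
  assumes "\<And>u v w. u \<in> supp f \<Longrightarrow> v \<in> supp g \<Longrightarrow> c u v w = c' u v w"
  shows "mult_sc c f g = mult_sc c' f g"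
  unfolding mult_sc_def using assms by (intro ext sum.cong) simp_all

lemma comult_sc_cong:
  assumes "\<And>u v w. w \<in> supp f \<Longrightarrow> d w u v = d' w u v"
  shows "comult_sc d f = comult_sc d' f"
  unfolding comult_sc_def using assms by (intro ext) (auto intro!: sum.cong)

lemma finite_supp_mult_sc:
  assumes "finite (supp f)" "finite (supp g)"
    and "\<And>u v. u \<in> supp f \<Longrightarrow> v \<in> supp g \<Longrightarrow> finite {w. c u v w \<noteq> 0}"
  shows "finite (supp (mult_sc c f g))"
proof (rule finite_subset)
  show "supp (mult_sc c f g) \<subseteq> (\<Union>u\<in>supp f. \<Union>v\<in>supp g. {w. c u v w \<noteq> 0})"
    unfolding supp_def mult_sc_def by (force intro: sum.neutral)
qed (use assms in blast)

lemma finite_supp_comult_sc: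
  assumes "finite (supp f)" "\<And>w. w \<in> supp f \<Longrightarrow> finite {(u, v). d w u v \<noteq> 0}"
  shows "finite (supp (comult_sc d f))"
proof (rule finite_subset)
  show "supp (comult_sc d f) \<subseteq> (\<Union>w\<in>supp f. {(u, v). d w u v \<noteq> 0})"
    unfolding supp_def comult_sc_def by (force intro: sum.neutral)
qed (use assms in blast)

lemma GSP_iff: "w \<in> GSP \<longleftrightarrow> packed w \<and> avoids212 w"
  by (simp add: GSP_def)

lemma Phi_eq_self_STdual_space: "f \<in> STdual_space \<Longrightarrow> Phi f = f"
  by (simp add: Phi_eq_self STdual_space_def space_def)

lemma STdual_mult_coeff_eq_NCQ_mult_coeff:
  assumes "u \<in> GSP" "v \<in> GSP"
  shows "(if u \<in> GSP \<and> v \<in> GSP \<and> w \<in> GSP then st_coprod_coeff w u v else 0)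
       = (if packed u \<and> packed v \<and> packed w then nc_prod_coeff u v w else 0)"
  using assms nc_prod_coeff_avoids212[of u v w] st_coprod_coeff_eq_nc_prod_coeff[of w u v]
  unfolding GSP_iff by auto

lemma NCQ_comult_coeff_eq_STdual_comult_coeff:
  assumes "w \<in> GSP"
  shows "(if packed u \<and> packed v \<and> packed w then nc_coprod_coeff w u v else 0)
       = (if u \<in> GSP \<and> v \<in> GSP \<and> w \<in> GSP then st_prod_coeff u v w else 0)"
proof (cases "packed u \<and> packed v")
  case True
  let ?v' = "map (\<lambda>x. x + maxw u) v"
  have "avoids212 u \<and> avoids212 v" if sh: "w \<in> shuffles u ?v'"
  proof -
    have "0 \<notin> set v" "\<forall>x\<in>set u. x \<le> maxw u" using True set_packed by auto
    then have "set u \<inter> set ?v' = {}" by fastforce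
    then have "avoids212 u" "avoids212 ?v'"
      using avoids212_shuffles_disjoint[OF sh] assms GSP_iff by blast+
    moreover have "strict_mono_on (set v) (\<lambda>x. x + maxw u)" by (rule strict_mono_onI) simp
    ultimately show ?thesis using avoids212_map_iff by blast
  qed
  then show ?thesis
    using True assms nc_coprod_coeff_eq_shuffles[of w u v] unfolding GSP_iff st_prod_coeff_def by auto
qed (use assms GSP_iff in auto)

lemma STdual_mult_eq_NCQ_mult:
  assumes "f \<in> space GSP" "g \<in> space GSP"
  shows "STdual_mult f g = NCQ_mult f g"
  unfolding STdual_mult_def NCQ_mult_def
  by (intro mult_sc_cong STdual_mult_coeff_eq_NCQ_mult_coeff) (use assms in \<open>auto simp: space_def\<close>)

lemma NCQ_comult_eq_STdual_comult:
  assumes "f \<in> space GSP"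
  shows "NCQ_comult f = STdual_comult f"
  unfolding STdual_comult_def NCQ_comult_def
  by (intro comult_sc_cong NCQ_comult_coeff_eq_STdual_comult_coeff) (use assms in \<open>auto simp: space_def\<close>)

lemma finite_supp_STdual_mult:
  assumes "f \<in> space GSP" "g \<in> space GSP"
  shows "finite (supp (STdual_mult f g))"
  unfolding STdual_mult_def
proof (rule finite_supp_mult_sc)
  fix u v
  have "packed w \<and> length w \<le> length u + length v"
    if "(if u \<in> GSP \<and> v \<in> GSP \<and> w \<in> GSP then st_coprod_coeff w u v else 0) \<noteq> 0" for w
  proof -
    have "packed w" "st_coprod_coeff w u v \<noteq> 0" using that by (simp_all add: GSP_iff split: if_splits)
    then show ?thesis
      using st_coprod_coeff_eq_nc_prod_coeff[of w u v] by (simp add: nc_prod_coeff_def split: if_splits)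
  qed
  then have "{w. (if u \<in> GSP \<and> v \<in> GSP \<and> w \<in> GSP then st_coprod_coeff w u v else 0) \<noteq> 0}
    \<subseteq> {w. packed w \<and> length w \<le> length u + length v}"
    by blast
  then show "finite {w. (if u \<in> GSP \<and> v \<in> GSP \<and> w \<in> GSP then st_coprod_coeff w u v else 0) \<noteq> 0}"
    using finite_packed_length_le finite_subset by blast
qed (use assms in \<open>auto simp: space_def\<close>)

lemma finite_supp_STdual_comult:
  assumes "f \<in> space GSP"
  shows "finite (supp (STdual_comult f))"
  unfolding STdual_comult_def
proof (rule finite_supp_comult_sc)
  fix w :: "nat list"
  let ?S = "{u. packed u \<and> length u \<le> length w}"
  have "{(u, v). (if u \<in> GSP \<and> v \<in> GSP \<and> w \<in> GSP then st_prod_coeff u v w else 0) \<noteq> 0}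
    \<subseteq> ?S \<times> ?S"
    by (auto simp: GSP_iff st_prod_coeff_def dest!: length_shuffles split: if_splits)
  then show "finite {(u, v). (if u \<in> GSP \<and> v \<in> GSP \<and> w \<in> GSP then st_prod_coeff u v w else 0) \<noteq> 0}"
    using finite_packed_length_le finite_subset by blast
qed (use assms in \<open>simp add: space_def\<close>)

theorem mainTheorem5:
  shows "Phi ` (STdual_space :: (nat list \<Rightarrow> 'k::field) set) \<subseteq> NCQ_space
    \<and> inj_on (Phi :: (nat list \<Rightarrow> 'k) \<Rightarrow> _) STdual_space
    \<and> (\<forall>f \<in> (STdual_space :: (nat list \<Rightarrow> 'k) set). \<forall>g \<in> STdual_space.
           Phi (STdual_mult f g) = NCQ_mult (Phi f) (Phi g))
    \<and> Phi (STdual_unit :: nat list \<Rightarrow> 'k) = NCQ_unit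
    \<and> (\<forall>f \<in> (STdual_space :: (nat list \<Rightarrow> 'k) set).
           NCQ_comult (Phi f) = Phi2 (STdual_comult f))
    \<and> (\<forall>f \<in> (STdual_space :: (nat list \<Rightarrow> 'k) set).
           NCQ_counit (Phi f) = STdual_counit f)"
proof (intro conjI ballI)
  show "Phi ` (STdual_space :: (nat list \<Rightarrow> 'k) set) \<subseteq> NCQ_space"
    by (auto simp: Phi_eq_self_STdual_space STdual_space_def NCQ_space_def space_def GSP_def)
  show "inj_on (Phi :: (nat list \<Rightarrow> 'k) \<Rightarrow> _) STdual_space"
    by (rule inj_onI) (metis Phi_eq_self_STdual_space)
  show "Phi (STdual_unit :: nat list \<Rightarrow> 'k) = NCQ_unit"
    unfolding STdual_unit_def NCQ_unit_def by (rule Phi_eq_self[OF finite_supp_delta])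
  fix f g :: "nat list \<Rightarrow> 'k"
  assume f: "f \<in> STdual_space"
  note Phi_f = Phi_eq_self_STdual_space[OF f]
  show "NCQ_counit (Phi f) = STdual_counit f"
    by (simp add: Phi_f NCQ_counit_def STdual_counit_def)
  show "NCQ_comult (Phi f) = Phi2 (STdual_comult f)"
    using f unfolding Phi_f STdual_space_def
    by (simp add: NCQ_comult_eq_STdual_comult Phi2_eq_self finite_supp_STdual_comult)
  assume g: "g \<in> STdual_space"
  then have "Phi (STdual_mult f g) = STdual_mult f g"
    using f unfolding STdual_space_def by (intro Phi_eq_self finite_supp_STdual_mult)
  then show "Phi (STdual_mult f g) = NCQ_mult (Phi f) (Phi g)"
    using f g unfolding Phi_f Phi_eq_self_STdual_space[OF g] STdual_space_def
    by (simp add: STdual_mult_eq_NCQ_mult)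
qed

end
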